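(* Let $h>0$, $n\in\mathbb{N}$, and let $\lambda:\mathbb{T}\to\mathbb{R}$ be an $n$-cycle with values $\lambda_0,\dots,\lambda_{n-1}\in\mathbb{R}\setminus\{\tfrac1h\}$, i.e. $\lambda(t)=\lambda_k$ whenever $t/h\equiv k \pmod n$. Assume $0<|e_{-\lambda}(nh)|\neq 1$. Let $f:\mathbb{T}\to\mathbb{R}$ be arbitrary. Then the equation $$\Delta_h y(t)+\lambda(t)y(t)=f(t),\qquad t\in\mathbb{T},$$ has Hyers–Ulam stability on $\mathbb{T}$ with Hyers–Ulam stability constant $$K_0(-\lambda)=\frac{h\,|e_{-\lambda}(nh)|}{\bigl|1-|e_{-\lambda}(nh)|\bigr|}\max\{S_0(-\lambda),\dots,S_{n-1}(-\lambda)\}.$$ Moreover, if $|e_{-\lambda}(nh)|>1$, then $K_0(-\lambda)$ is the minimum Hyers–Ulam stability constant for this equation.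
   Context: Fix $h>0$ and let $\mathbb{T}=\{0,h,2h,3h,\dots\}$. For $x:\mathbb{T}\to\mathbb{R}$, $\Delta_h x(t)=\frac{x(t+h)-x(t)}{h}$ and $\Delta_h^2x=\Delta_h(\Delta_h x)$, $\Delta_h^3x=\Delta_h(\Delta_h^2 x)$. An $n$-cycle is a function $\mu:\mathbb{T}\to\mathbb{R}$ with $\mu(t)=\mu_k$ whenever $t/h\equiv k\pmod n$, $k\in\{0,\dots,n-1\}$, which has period $n$ and no smaller period. For such $\mu$ define the discrete exponential $e_\mu(t)=\prod_{k=0}^{t/h-1}(1+h\mu(kh))$ (empty product $=1$), so $e_\mu(nh)=\prod_{k=0}^{n-1}(1+h\mu_k)$. For $k\in\{0,\dots,n-1\}$ define $$S_k(\mu)=\sum_{j=1}^{n}\prod_{i=0}^{j-1}\frac{1}{|1+h\mu_{(k+i)\bmod n}|},$$ (e.g. $S_0(\mu)=\frac{1}{|1+h\mu_0|}+\frac{1}{|1+h\mu_0||1+h\mu_1|}+\dots+\frac{1}{|1+h\mu_0|\cdots|1+h\mu_{n-1}|}$), and, when $0<|e_\mu(nh)|\neq1$, $$K_0(\mu)=\frac{h|e_\mu(nh)|}{\bigl|1-|e_\mu(nh)|\bigr|}\max\{S_0(\mu),\dots,S_{n-1}(\mu)\}.$$ Here $-\lambda$ denotes the $n$-cycle with values $-\lambda_0,\dots,-\lambda_{n-1}$. Hyers–Ulam stability: an equation $\mathcal{L}[y](t)=f(t)$, $t\in\mathbb{T}$ (with $\mathcal{L}$ a linear difference operator) has Hyers–Ulam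 stability on $\mathbb{T}$ with Hyers–Ulam stability constant $K>0$ if for every $\varepsilon>0$ and every $\xi:\mathbb{T}\to\mathbb{R}$ with $|\mathcal{L}[\xi](t)-f(t)|\le\varepsilon$ for all $t\in\mathbb{T}$, there is a solution $y:\mathbb{T}\to\mathbb{R}$ of the equation with $|\xi(t)-y(t)|\le K\varepsilon$ for all $t\in\mathbb{T}$. The minimum Hyers–Ulam stability constant is the smallest such $K$. *)

theory Defs
  imports Complex_Main
begin

text \<open>Functions on T = {0, h, 2h, ...} are represented as functions nat => real,
  where index k stands for the point t = k*h.\<close>

definition delta_h :: "real \<Rightarrow> (nat \<Rightarrow> real) \<Rightarrow> nat \<Rightarrow> real" where
  "delta_h h x k = (x (k + 1) - x k) / h"

definition is_cycle :: "nat \<Rightarrow> (nat \<Rightarrow> real) \<Rightarrow> bool" where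
  "is_cycle n mu \<longleftrightarrow> n \<ge> 1 \<and> (\<forall>k. mu (k + n) = mu k) \<and>
     (\<forall>m. 0 < m \<and> m < n \<longrightarrow> \<not> (\<forall>k. mu (k + m) = mu k))"

definition dexp :: "real \<Rightarrow> (nat \<Rightarrow> real) \<Rightarrow> nat \<Rightarrow> real" where
  "dexp h mu k = (\<Prod>i<k. 1 + h * mu i)"

definition S_k :: "real \<Rightarrow> nat \<Rightarrow> (nat \<Rightarrow> real) \<Rightarrow> nat \<Rightarrow> real" where
  "S_k h n mu k = (\<Sum>j=1..n. \<Prod>i<j. 1 / \<bar>1 + h * mu ((k + i) mod n)\<bar>)"

definition K0 :: "real \<Rightarrow> nat \<Rightarrow> (nat \<Rightarrow> real) \<Rightarrow> real" where
  "K0 h n mu = h * \<bar>dexp h mu n\<bar> / \<bar>1 - \<bar>dexp h mu n\<bar>\<bar> *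
                 Max ((\<lambda>k. S_k h n mu k) ` {0..<n})"

definition HU_stable :: "((nat \<Rightarrow> real) \<Rightarrow> nat \<Rightarrow> real) \<Rightarrow> (nat \<Rightarrow> real) \<Rightarrow> real \<Rightarrow> bool" where
  "HU_stable L f K \<longleftrightarrow> K > 0 \<and>
     (\<forall>\<epsilon>>0. \<forall>\<xi>. (\<forall>t. \<bar>L \<xi> t - f t\<bar> \<le> \<epsilon>) \<longrightarrow>
        (\<exists>y. (\<forall>t. L y t = f t) \<and> (\<forall>t. \<bar>\<xi> t - y t\<bar> \<le> K * \<epsilon>)))"

definition min_HU_constant :: "((nat \<Rightarrow> real) \<Rightarrow> nat \<Rightarrow> real) \<Rightarrow> (nat \<Rightarrow> real) \<Rightarrow> real \<Rightarrow> bool" where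
  "min_HU_constant L f K \<longleftrightarrow> HU_stable L f K \<and> (\<forall>K'. HU_stable L f K' \<longrightarrow> K \<le> K')"

definition L_op :: "real \<Rightarrow> (nat \<Rightarrow> real) \<Rightarrow> (nat \<Rightarrow> real) \<Rightarrow> nat \<Rightarrow> real" where
  "L_op h lam y t = delta_h h y t + lam t * y t"

end

theory Submission imports Defs begin

(* With a(t) = 1 - h lam(t) the equation reads y(t+1) = a(t) y(t) + h e(t), and the product
   E = e_{-lam}(nh) of a over one period governs the homogeneous solutions. An approximate
   solution with defect bounded by eps is corrected by a particular solution d of the equation
   with that defect as right-hand side: for |E| < 1 the forward solution with d(0) = 0, for
   |E| > 1 the backward solution d(t) = -h sum_j e(t+j) / (a(t) ... a(t+j)). Summing the
   geometric decay of the kernel period by period gives |d(t)| <= h eps |E| / |1 - |E|| S_t(-lam)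
   in both cases. For |E| > 1 the homogeneous solutions grow like |E|^q, so the backward solution
   is the only bounded particular solution; choosing e as the sign of its kernel at an index
   maximising S_t shows that the bound is attained, hence the constant is minimal. *)

lemma prod_lessThan_add:
  fixes g :: "nat \<Rightarrow> 'a::comm_monoid_mult"
  shows "(\<Prod>i<m + p. g i) = (\<Prod>i<m. g i) * (\<Prod>i<p. g (m + i))"
  by (induction p) (auto simp: ac_simps)

lemma prod_periodic_shift:
  fixes F :: "nat \<Rightarrow> 'a::field"
  assumes "\<And>k. F (k + n) = F k" and "\<And>k. F k \<noteq> 0"
  shows "(\<Prod>i<n. F (k + i)) = (\<Prod>i<n. F i)"
proof (induction k)
  case (Suc k)
  have "F k * (\<Prod>i<n. F (Suc k + i)) = (\<Prod>i<Suc n. F (k + i))"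
    by (subst prod.lessThan_Suc_shift) simp
  also have "\<dots> = F k * (\<Prod>i<n. F (k + i))"
    using assms(1)[of k] by (simp add: add.commute)
  finally show ?case using Suc assms(2)[of k] by simp
qed simp

lemma HU_stable_linearI:
  assumes diff: "\<And>x y t. L (\<lambda>t. x t - y t) t = L x t - L y t"
    and "K > 0"
    and solve: "\<And>\<epsilon> e. \<epsilon> > 0 \<Longrightarrow> (\<And>t. \<bar>e t\<bar> \<le> \<epsilon>) \<Longrightarrow>
                  \<exists>d. (\<forall>t. L d t = e t) \<and> (\<forall>t. \<bar>d t\<bar> \<le> K * \<epsilon>)"
  shows "HU_stable L f K"
  unfolding HU_stable_def
proof (intro conjI allI impI)
  fix \<epsilon> :: real and \<xi>
  assume "\<epsilon> > 0" and "\<forall>t. \<bar>L \<xi> t - f t\<bar> \<le> \<epsilon>"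
  then obtain d where d: "\<forall>t. L d t = L \<xi> t - f t" and bound: "\<forall>t. \<bar>d t\<bar> \<le> K * \<epsilon>"
    using solve[of \<epsilon> "\<lambda>t. L \<xi> t - f t"] by blast
  show "\<exists>y. (\<forall>t. L y t = f t) \<and> (\<forall>t. \<bar>\<xi> t - y t\<bar> \<le> K * \<epsilon>)"
    by (rule exI[of _ "\<lambda>t. \<xi> t - d t"]) (simp add: diff d bound)
qed fact

locale cyclic_delta_equation =
  fixes h :: real and n :: nat and lam :: "nat \<Rightarrow> real"
  assumes h_pos: "h > 0" and n_pos: "n > 0"
    and lam_periodic: "\<And>k. lam (k + n) = lam k"
    and lam_neq: "\<And>k. lam k \<noteq> 1 / h"
begin

definition coef :: "nat \<Rightarrow> real" where
  "coef t = 1 - h * lam t"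

definition monodromy :: real where
  "monodromy = (\<Prod>i<n. coef i)"

definition inv_flow :: "nat \<Rightarrow> nat \<Rightarrow> real" where
  "inv_flow k m = (\<Prod>i<m. 1 / coef (k + i))"

definition S :: "nat \<Rightarrow> real" where
  "S k = (\<Sum>j<n. \<bar>inv_flow k (Suc j)\<bar>)"

definition weight :: "nat \<Rightarrow> real" where
  "weight k = \<bar>monodromy\<bar> / \<bar>1 - \<bar>monodromy\<bar>\<bar> * S k"

lemma coef_nonzero: "coef t \<noteq> 0"
  using lam_neq[of t] h_pos by (auto simp: coef_def field_simps)

lemma coef_periodic: "coef (k + q * n) = coef k"
proof (induction q)
  case (Suc q)
  then show ?case
    using lam_periodic[of "k + q * n"] by (simp add: coef_def ac_simps)
qed simp

lemma coef_mod: "coef (k mod n) = coef k"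
  using coef_periodic[of "k mod n" "k div n"] by simp

lemma dexp_eq_monodromy: "dexp h (\<lambda>k. - lam k) n = monodromy"
  by (simp add: dexp_def monodromy_def coef_def)

lemma monodromy_nonzero: "monodromy \<noteq> 0"
  by (simp add: monodromy_def coef_nonzero)

lemma L_op_diff: "L_op h lam (\<lambda>t. x t - y t) t = L_op h lam x t - L_op h lam y t"
  using h_pos by (simp add: L_op_def delta_h_def field_simps)

lemma L_op_eq_iff: "L_op h lam y t = e \<longleftrightarrow> y (Suc t) = coef t * y t + h * e"
  using h_pos by (auto simp: L_op_def delta_h_def coef_def field_simps)

lemma inv_flow_add: "inv_flow k (m + p) = inv_flow k m * inv_flow (k + m) p"
  by (simp add: inv_flow_def prod_lessThan_add add.assoc)

lemma inv_flow_Suc: "inv_flow k (Suc m) = inv_flow (Suc k) m / coef k"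
  unfolding inv_flow_def by (subst prod.lessThan_Suc_shift) simp

lemma inv_flow_periodic: "inv_flow (k + q * n) m = inv_flow k m"
  unfolding inv_flow_def using coef_periodic[of "k + _" q] by (simp add: ac_simps)

lemma inv_flow_period: "inv_flow k n = 1 / monodromy"
proof -
  have "(\<Prod>i<n. coef (k + i)) = monodromy"
    unfolding monodromy_def
    by (rule prod_periodic_shift) (use coef_periodic[of _ 1] coef_nonzero in auto)
  then show ?thesis by (simp add: inv_flow_def prod_dividef)
qed

lemma inv_flow_periods: "inv_flow k (q * n) = (1 / monodromy) ^ q"
proof (induction q)
  case (Suc q)
  have "inv_flow k (Suc q * n) = inv_flow k (q * n + n)"
    by (simp add: add.commute)
  also have "\<dots> = inv_flow k (q * n) * inv_flow (k + q * n) n"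
    by (rule inv_flow_add)
  finally show ?case by (simp add: Suc inv_flow_period)
qed (simp add: inv_flow_def)

lemma S_k_eq_S: "S_k h n (\<lambda>k. - lam k) k = S k"
proof -
  have "1 + h * - lam ((k + i) mod n) = coef (k + i)" for i
    using coef_mod[of "k + i"] by (simp add: coef_def)
  then show ?thesis
    unfolding S_k_def S_def inv_flow_def
    by (simp add: abs_prod sum.atLeast1_atMost_eq del: prod.lessThan_Suc)
qed

lemma S_mod: "S (k mod n) = S k"
  using inv_flow_periodic[of "k mod n" "k div n"] by (simp add: S_def)

lemma S_pos: "S k > 0"
  unfolding S_def inv_flow_def using n_pos coef_nonzero
  by (intro sum_pos) (auto simp: prod_zero_iff)

lemma S_step: "\<bar>coef k\<bar> * S k = 1 + S (Suc k) - 1 / \<bar>monodromy\<bar>"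
proof -
  have "\<bar>coef k\<bar> * S k = (\<Sum>j<n. \<bar>inv_flow (Suc k) j\<bar>)"
    unfolding S_def inv_flow_Suc using coef_nonzero[of k]
    by (simp add: sum_distrib_left abs_divide del: prod.lessThan_Suc)
  also have "\<dots> = (\<Sum>j<Suc n. \<bar>inv_flow (Suc k) j\<bar>) - \<bar>inv_flow (Suc k) n\<bar>"
    by simp
  also have "(\<Sum>j<Suc n. \<bar>inv_flow (Suc k) j\<bar>) = 1 + S (Suc k)"
    unfolding S_def by (subst sum.lessThan_Suc_shift) (simp add: inv_flow_def)
  finally show ?thesis by (simp add: inv_flow_period)
qed

lemma K0_eq:
  "K0 h n (\<lambda>k. - lam k) = h * \<bar>monodromy\<bar> / \<bar>1 - \<bar>monodromy\<bar>\<bar> * Max (S ` {0..<n})"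
  by (simp add: K0_def dexp_eq_monodromy S_k_eq_S)

lemma weight_le_K0: "h * weight t \<le> K0 h n (\<lambda>k. - lam k)"
proof -
  have "S t \<le> Max (S ` {0..<n})"
    using n_pos by (subst S_mod[symmetric]) (intro Max_ge, auto)
  moreover have "h * \<bar>monodromy\<bar> / \<bar>1 - \<bar>monodromy\<bar>\<bar> \<ge> 0"
    using h_pos by simp
  ultimately have "h * \<bar>monodromy\<bar> / \<bar>1 - \<bar>monodromy\<bar>\<bar> * S t \<le> K0 h n (\<lambda>k. - lam k)"
    unfolding K0_eq by (rule mult_left_mono)
  then show ?thesis by (simp add: weight_def)
qed

lemma weight_attains_K0: "\<exists>r. h * weight r = K0 h n (\<lambda>k. - lam k)"
proof -
  obtain r where "S r = Max (S ` {0..<n})"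
    using Max_in[of "S ` {0..<n}"] n_pos by fastforce
  then show ?thesis by (auto simp: K0_eq weight_def)
qed

lemma K0_pos:
  assumes "\<bar>monodromy\<bar> \<noteq> 1"
  shows "K0 h n (\<lambda>k. - lam k) > 0"
proof -
  have "h * weight 0 > 0"
    using h_pos S_pos[of 0] monodromy_nonzero assms by (simp add: weight_def)
  then show ?thesis using weight_le_K0[of 0] by linarith
qed

definition forward_sol :: "(nat \<Rightarrow> real) \<Rightarrow> nat \<Rightarrow> real" where
  "forward_sol e = rec_nat 0 (\<lambda>t y. coef t * y + h * e t)"

lemma forward_sol_0: "forward_sol e 0 = 0"
  and forward_sol_Suc: "forward_sol e (Suc t) = coef t * forward_sol e t + h * e t"
  by (simp_all add: forward_sol_def)

lemma L_op_forward_sol: "L_op h lam (forward_sol e) t = e t"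
  by (simp add: L_op_eq_iff forward_sol_Suc)

lemma weight_step:
  assumes "\<bar>monodromy\<bar> < 1"
  shows "weight (Suc k) = \<bar>coef k\<bar> * weight k + 1"
proof -
  define E where "E = \<bar>monodromy\<bar>"
  have "0 < E" "E < 1"
    using assms monodromy_nonzero by (auto simp: E_def)
  then have "E / (1 - E) * (1 + S (Suc k) - 1 / E) = E / (1 - E) * S (Suc k) - 1"
    by (simp add: field_simps)
  then show ?thesis
    using \<open>E < 1\<close> by (simp add: weight_def mult.left_commute[of "\<bar>coef k\<bar>"] S_step flip: E_def)
qed

lemma forward_sol_bound:
  assumes "\<bar>monodromy\<bar> < 1" and "\<And>t. \<bar>e t\<bar> \<le> \<epsilon>"
  shows "\<bar>forward_sol e t\<bar> \<le> h * \<epsilon> * weight t"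
proof (induction t)
  case 0
  have "weight 0 \<ge> 0" using S_pos[of 0] by (simp add: weight_def)
  moreover have "\<epsilon> \<ge> 0" using assms(2)[of 0] by linarith
  ultimately show ?case using h_pos by (simp add: forward_sol_0)
next
  case (Suc t)
  have "\<bar>forward_sol e (Suc t)\<bar> \<le> \<bar>coef t\<bar> * \<bar>forward_sol e t\<bar> + h * \<bar>e t\<bar>"
    using abs_triangle_ineq[of "coef t * forward_sol e t" "h * e t"] h_pos
    by (simp add: forward_sol_Suc abs_mult)
  also have "\<dots> \<le> \<bar>coef t\<bar> * (h * \<epsilon> * weight t) + h * \<epsilon>"
    using Suc assms(2)[of t] h_pos by (intro add_mono mult_left_mono) auto
  also have "\<dots> = h * \<epsilon> * weight (Suc t)"
    by (simp add: weight_step[OF assms(1)] algebra_simps)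
  finally show ?case .
qed

lemma HU_stable_contracting:
  assumes "\<bar>monodromy\<bar> < 1"
  shows "HU_stable (L_op h lam) f (K0 h n (\<lambda>k. - lam k))"
proof (rule HU_stable_linearI[OF L_op_diff K0_pos])
  fix \<epsilon> :: real and e :: "nat \<Rightarrow> real"
  assume "\<epsilon> > 0" and "\<And>t. \<bar>e t\<bar> \<le> \<epsilon>"
  have "\<bar>forward_sol e t\<bar> \<le> K0 h n (\<lambda>k. - lam k) * \<epsilon>" for t
  proof -
    have "\<bar>forward_sol e t\<bar> \<le> h * weight t * \<epsilon>"
      using forward_sol_bound[OF assms \<open>\<And>t. \<bar>e t\<bar> \<le> \<epsilon>\<close>] by (simp add: ac_simps)
    also have "\<dots> \<le> K0 h n (\<lambda>k. - lam k) * \<epsilon>"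
      using weight_le_K0[of t] \<open>\<epsilon> > 0\<close> by (simp add: mult_right_mono)
    finally show ?thesis .
  qed
  then show "\<exists>d. (\<forall>t. L_op h lam d t = e t) \<and> (\<forall>t. \<bar>d t\<bar> \<le> K0 h n (\<lambda>k. - lam k) * \<epsilon>)"
    using L_op_forward_sol by blast
qed (use assms in simp)

definition backward_sol :: "(nat \<Rightarrow> real) \<Rightarrow> nat \<Rightarrow> real" where
  "backward_sol e k = - h * (\<Sum>j. e (k + j) * inv_flow k (Suc j))"

context
  assumes expanding: "\<bar>monodromy\<bar> > 1"
begin

lemma abs_inv_flow_block:
  "(\<Sum>j\<in>{q * n..<q * n + n}. \<bar>inv_flow k (Suc j)\<bar>) = (1 / \<bar>monodromy\<bar>) ^ q * S k"
proof -
  have "\<bar>inv_flow k (Suc (i + q * n))\<bar> = (1 / \<bar>monodromy\<bar>) ^ q * \<bar>inv_flow k (Suc i)\<bar>" for i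
  proof -
    have "inv_flow k (Suc (i + q * n)) = inv_flow k (q * n) * inv_flow (k + q * n) (Suc i)"
      using inv_flow_add[of k "q * n" "Suc i"] by (simp add: add.commute)
    then show ?thesis
      by (simp only: inv_flow_periods inv_flow_periodic abs_mult power_abs) simp
  qed
  then have "(\<Sum>j\<in>{0 + q * n..<n + q * n}. \<bar>inv_flow k (Suc j)\<bar>) = (1 / \<bar>monodromy\<bar>) ^ q * S k"
    unfolding sum.shift_bounds_nat_ivl by (simp add: S_def sum_distrib_left atLeast0LessThan)
  then show ?thesis by (simp add: add.commute)
qed

lemma abs_inv_flow_sums: "(\<lambda>j. \<bar>inv_flow k (Suc j)\<bar>) sums weight k"
proof -
  define r where "r = 1 / \<bar>monodromy\<bar>"
  have "0 < r" "r < 1" using expanding by (auto simp: r_def)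
  then have geom: "(\<lambda>q. r ^ q) sums (1 / (1 - r))" by (intro geometric_sums) simp
  have partial: "(\<Sum>j<q * n. \<bar>inv_flow k (Suc j)\<bar>) = (\<Sum>p<q. r ^ p) * S k" for q
  proof -
    have "(\<Sum>j<q * n. \<bar>inv_flow k (Suc j)\<bar>) =
          (\<Sum>p<q. \<Sum>j\<in>{p * n..<p * n + n}. \<bar>inv_flow k (Suc j)\<bar>)"
      by (rule sum.nat_group[symmetric])
    then show ?thesis
      by (simp only: abs_inv_flow_block sum_distrib_right flip: r_def)
  qed
  have "summable (\<lambda>j. \<bar>inv_flow k (Suc j)\<bar>)"
  proof (rule bounded_imp_summable)
    fix N
    have "Suc N * 1 \<le> Suc N * n" using n_pos by (intro mult_le_mono2) simp
    then have "N < Suc N * n" by simp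
    then have "(\<Sum>j\<le>N. \<bar>inv_flow k (Suc j)\<bar>) \<le> (\<Sum>j<Suc N * n. \<bar>inv_flow k (Suc j)\<bar>)"
      by (intro sum_mono2) auto
    also have "\<dots> \<le> 1 / (1 - r) * S k"
    proof -
      have "(\<Sum>p<Suc N. r ^ p) \<le> (\<Sum>p. r ^ p)"
        using \<open>0 < r\<close> by (intro sum_le_suminf[OF sums_summable[OF geom]]) auto
      then show ?thesis
        unfolding partial sums_unique[OF geom, symmetric] using S_pos[of k]
        by (intro mult_right_mono) auto
    qed
    finally show "(\<Sum>j\<le>N. \<bar>inv_flow k (Suc j)\<bar>) \<le> 1 / (1 - r) * S k" .
  qed simp
  then have "(\<lambda>q. (\<Sum>j\<in>{q * n..<q * n + n}. \<bar>inv_flow k (Suc j)\<bar>)) sums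
               (\<Sum>j. \<bar>inv_flow k (Suc j)\<bar>)"
    using n_pos by (intro sums_group) auto
  moreover have "(\<lambda>q. (\<Sum>j\<in>{q * n..<q * n + n}. \<bar>inv_flow k (Suc j)\<bar>)) sums weight k"
  proof -
    have "1 / (1 - r) = \<bar>monodromy\<bar> / \<bar>1 - \<bar>monodromy\<bar>\<bar>"
      using expanding by (simp add: r_def field_simps)
    then show ?thesis
      using sums_mult2[OF geom, of "S k"] by (simp add: abs_inv_flow_block weight_def flip: r_def)
  qed
  ultimately have "(\<Sum>j. \<bar>inv_flow k (Suc j)\<bar>) = weight k"
    by (rule sums_unique2)
  with \<open>summable _\<close> show ?thesis
    using summable_sums by fastforce
qed

lemma backward_terms_summable:
  assumes "\<And>t. \<bar>e t\<bar> \<le> B"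
  shows "summable (\<lambda>j. \<bar>e (k + j) * inv_flow k (Suc j)\<bar>)"
proof (rule summable_comparison_test')
  show "summable (\<lambda>j. B * \<bar>inv_flow k (Suc j)\<bar>)"
    using abs_inv_flow_sums[of k] by (intro summable_mult sums_summable)
  show "norm \<bar>e (k + j) * inv_flow k (Suc j)\<bar> \<le> B * \<bar>inv_flow k (Suc j)\<bar>" for j
    using assms[of "k + j"] by (simp add: abs_mult mult_right_mono)
qed

lemma backward_sol_bound:
  assumes "\<And>t. \<bar>e t\<bar> \<le> B"
  shows "\<bar>backward_sol e k\<bar> \<le> h * B * weight k"
proof -
  note summable = backward_terms_summable[OF assms]
  have "\<bar>\<Sum>j. e (k + j) * inv_flow k (Suc j)\<bar> \<le> (\<Sum>j. \<bar>e (k + j) * inv_flow k (Suc j)\<bar>)"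
    by (rule summable_rabs[OF summable])
  also have "\<dots> \<le> (\<Sum>j. B * \<bar>inv_flow k (Suc j)\<bar>)"
    using assms abs_inv_flow_sums[of k]
    by (intro suminf_le summable summable_mult sums_summable) (simp_all add: abs_mult mult_right_mono)
  also have "\<dots> = B * weight k"
    using sums_unique[OF abs_inv_flow_sums[of k]] abs_inv_flow_sums[of k]
    by (simp add: suminf_mult sums_summable)
  finally show ?thesis
    using h_pos by (simp add: backward_sol_def abs_mult mult_left_mono mult.assoc)
qed

lemma backward_sol_Suc:
  assumes "\<And>t. \<bar>e t\<bar> \<le> B"
  shows "backward_sol e (Suc k) = coef k * backward_sol e k + h * e k"
proof -
  define F where "F j = e (k + j) * inv_flow (Suc k) j" for j
  have scaled: "coef k * (e (k + j) * inv_flow k (Suc j)) = F j" for j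
    using coef_nonzero[of k] by (simp add: F_def inv_flow_Suc)
  have "summable (\<lambda>j. e (k + j) * inv_flow k (Suc j))"
    using backward_terms_summable[OF assms] by (rule summable_rabs_cancel)
  then have "(\<lambda>j. coef k * (e (k + j) * inv_flow k (Suc j))) sums
               (coef k * (\<Sum>j. e (k + j) * inv_flow k (Suc j)))"
    by (rule sums_mult[OF summable_sums])
  then have "F sums (coef k * (\<Sum>j. e (k + j) * inv_flow k (Suc j)))"
    by (simp only: scaled)
  then have "(\<Sum>j. F (Suc j)) = coef k * (\<Sum>j. e (k + j) * inv_flow k (Suc j)) - F 0"
    by (simp add: suminf_split_head sums_summable sums_unique[symmetric])
  moreover have "backward_sol e (Suc k) = - h * (\<Sum>j. F (Suc j))"
    by (simp add: backward_sol_def F_def)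
  moreover have "F 0 = e k"
    by (simp add: F_def inv_flow_def)
  ultimately show ?thesis
    unfolding backward_sol_def[of e k] by (simp add: algebra_simps) (simp flip: distrib_left)
qed

lemma L_op_backward_sol:
  assumes "\<And>t. \<bar>e t\<bar> \<le> B"
  shows "L_op h lam (backward_sol e) t = e t"
  using backward_sol_Suc[OF assms] by (simp add: L_op_eq_iff)

lemma HU_stable_expanding: "HU_stable (L_op h lam) f (K0 h n (\<lambda>k. - lam k))"
proof (rule HU_stable_linearI[OF L_op_diff K0_pos])
  fix \<epsilon> :: real and e :: "nat \<Rightarrow> real"
  assume "\<epsilon> > 0" and bound: "\<And>t. \<bar>e t\<bar> \<le> \<epsilon>"
  have "\<bar>backward_sol e t\<bar> \<le> K0 h n (\<lambda>k. - lam k) * \<epsilon>" for t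
  proof -
    have "\<bar>backward_sol e t\<bar> \<le> h * weight t * \<epsilon>"
      using backward_sol_bound[OF bound] by (simp add: ac_simps)
    also have "\<dots> \<le> K0 h n (\<lambda>k. - lam k) * \<epsilon>"
      using weight_le_K0[of t] \<open>\<epsilon> > 0\<close> by (simp add: mult_right_mono)
    finally show ?thesis .
  qed
  moreover have "L_op h lam (backward_sol e) t = e t" for t
    using bound by (rule L_op_backward_sol)
  ultimately show "\<exists>d. (\<forall>t. L_op h lam d t = e t) \<and> (\<forall>t. \<bar>d t\<bar> \<le> K0 h n (\<lambda>k. - lam k) * \<epsilon>)"
    by blast
qed (use expanding in simp)

lemma bounded_homogeneous_sol_eq_0:
  assumes hom: "\<And>t. L_op h lam w t = 0" and bounded: "\<And>t. \<bar>w t\<bar> \<le> B"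
  shows "w t = 0"
proof -
  have step: "w (Suc t) = coef t * w t" for t
    using hom[of t] by (simp add: L_op_eq_iff)
  have flow: "w (k + m) = (\<Prod>i<m. coef (k + i)) * w k" for k m
    by (induction m) (simp_all add: step ac_simps)
  have periods: "w (q * n) = monodromy ^ q * w 0" for q
  proof (induction q)
    case (Suc q)
    have "(\<Prod>i<n. coef (q * n + i)) = monodromy"
      using coef_periodic[of _ q] by (simp add: monodromy_def ac_simps)
    then show ?case
      using flow[of "q * n" n] by (simp add: Suc add.commute)
  qed simp
  have "w 0 = 0"
  proof (rule ccontr)
    assume "w 0 \<noteq> 0"
    obtain q where "B / \<bar>w 0\<bar> < \<bar>monodromy\<bar> ^ q"
      using real_arch_pow[OF expanding] by blast
    then have "B < \<bar>w (q * n)\<bar>"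
      using \<open>w 0 \<noteq> 0\<close> by (simp add: periods abs_mult power_abs divide_less_eq)
    with bounded show False by (meson not_le)
  qed
  then show ?thesis by (induction t) (simp_all add: step)
qed

lemma K0_le_HU_constant:
  assumes "HU_stable (L_op h lam) f K"
  shows "K0 h n (\<lambda>k. - lam k) \<le> K"
proof -
  obtain r where r: "h * weight r = K0 h n (\<lambda>k. - lam k)"
    using weight_attains_K0 by blast
  \<comment> \<open>the defect that makes the backward solution attain its bound at r\<close>
  define e where "e t = (if r \<le> t then sgn (inv_flow r (Suc (t - r))) else 0)" for t
  have e_bound: "\<bar>e t\<bar> \<le> 1" for t
    by (simp add: e_def abs_sgn_eq)
  define \<xi> where "\<xi> = forward_sol (\<lambda>t. f t + e t)"
  have "\<forall>t. \<bar>L_op h lam \<xi> t - f t\<bar> \<le> 1"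
    using e_bound by (simp add: \<xi>_def L_op_forward_sol)
  then obtain y where y: "\<forall>t. L_op h lam y t = f t" and close: "\<forall>t. \<bar>\<xi> t - y t\<bar> \<le> K"
    using assms unfolding HU_stable_def by (metis zero_less_one mult.right_neutral)
  define w where "w t = (\<xi> t - y t) - backward_sol e t" for t
  have "L_op h lam w t = 0" for t
  proof -
    have "L_op h lam w t = L_op h lam (\<lambda>t. \<xi> t - y t) t - L_op h lam (backward_sol e) t"
      unfolding w_def[abs_def] by (rule L_op_diff)
    then show ?thesis
      using y L_op_backward_sol[of e 1 t, OF e_bound]
      by (simp add: L_op_diff \<xi>_def L_op_forward_sol)
  qed
  moreover have "\<bar>w t\<bar> \<le> K + K0 h n (\<lambda>k. - lam k)" for t
    using close[rule_format, of t] backward_sol_bound[of e 1 t, OF e_bound] weight_le_K0[of t]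
    unfolding w_def by (simp add: abs_le_iff)
  ultimately have "\<xi> r - y r = backward_sol e r"
    using bounded_homogeneous_sol_eq_0 unfolding w_def by fastforce
  also have "backward_sol e r = - (h * weight r)"
  proof -
    have "e (r + j) * inv_flow r (Suc j) = \<bar>inv_flow r (Suc j)\<bar>" for j
      by (simp add: e_def sgn_mult_self_eq abs_sgn)
    then show ?thesis
      by (simp add: backward_sol_def sums_unique[OF abs_inv_flow_sums, symmetric])
  qed
  finally have "\<bar>\<xi> r - y r\<bar> = K0 h n (\<lambda>k. - lam k)"
    using r K0_pos expanding by simp
  with close show ?thesis by metis
qed

end

end

theorem theorem2p5:
  fixes h :: real and n :: nat and lam f :: "nat \<Rightarrow> real"
  assumes "h > 0"
    and "is_cycle n lam"
    and "\<forall>k. lam k \<noteq> 1 / h"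
    and "0 < \<bar>dexp h (\<lambda>k. - lam k) n\<bar>"
    and "\<bar>dexp h (\<lambda>k. - lam k) n\<bar> \<noteq> 1"
  shows "HU_stable (L_op h lam) f (K0 h n (\<lambda>k. - lam k))
    \<and> (\<bar>dexp h (\<lambda>k. - lam k) n\<bar> > 1 \<longrightarrow>
         min_HU_constant (L_op h lam) f (K0 h n (\<lambda>k. - lam k)))"
proof -
  interpret cyclic_delta_equation h n lam
    using assms(1-3) unfolding is_cycle_def by unfold_locales auto
  show ?thesis
  proof (cases "\<bar>monodromy\<bar> > 1")
    case True
    then show ?thesis
      by (simp add: dexp_eq_monodromy min_HU_constant_def HU_stable_expanding K0_le_HU_constant)
  next
    case False
    with assms(5) have "\<bar>monodromy\<bar> < 1"
      by (simp add: dexp_eq_monodromy)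
    then show ?thesis
      using False by (simp add: dexp_eq_monodromy HU_stable_contracting)
  qed
qed

end
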